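(* Let $U\subset\mathbb R^n$ be open, $X$ a $C^1$ vector field on $U$, $f=(f_0,f_1,\dots,f_\ell):U\to\mathbb R^{r+\ell}$ a $C^2$ map, $x_0\in U$, $K$ a constant symmetric positive definite $(r+\ell)\times(r+\ell)$ matrix, and $V(x)=\tfrac12(f(x)-f(x_0))^TK(f(x)-f(x_0))$. Assume $\nabla V(x)\cdot X(x)=0$ for all $x\in U$, $V^{-1}(0)$ is compact, and there is an open set $W\subset U$ containing $V^{-1}(0)$ such that $Df(x)$ is onto for all $x\in W\setminus V^{-1}(0)$. Then there is a number $c>0$ (restricting the system, if necessary, to an open neighborhood of $V^{-1}(0)$ contained in $W$) such that every trajectory of $\dot x = X(x)-\nabla V(x)$ starting in $V^{-1}([0,c])$ remains in $V^{-1}([0,c])$ for all $t\ge0$ and converges to $V^{-1}(0)$ as $t\to\infty$. *)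

theory Defs
  imports "HOL-Analysis.Analysis"
begin

definition C1_on :: "'a::euclidean_space set \<Rightarrow> ('a \<Rightarrow> 'b::real_normed_vector) \<Rightarrow> bool" where
  "C1_on S g \<longleftrightarrow> (\<exists>g'. (\<forall>x\<in>S. (g has_derivative blinfun_apply (g' x)) (at x)) \<and> continuous_on S g')"

definition C2_on :: "'a::euclidean_space set \<Rightarrow> ('a \<Rightarrow> 'b::real_normed_vector) \<Rightarrow> bool" where
  "C2_on S g \<longleftrightarrow> (\<exists>g'. (\<forall>x\<in>S. (g has_derivative blinfun_apply (g' x)) (at x)) \<and> C1_on S g')"

definition grad :: "(real^'n \<Rightarrow> real) \<Rightarrow> real^'n \<Rightarrow> real^'n" where
  "grad V x = (SOME g. (V has_derivative (\<lambda>h. g \<bullet> h)) (at x))"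

definition sym_pos_def :: "real^'m^'m \<Rightarrow> bool" where
  "sym_pos_def K \<longleftrightarrow> transpose K = K \<and> (\<forall>v. v \<noteq> 0 \<longrightarrow> v \<bullet> (K *v v) > 0)"

end

theory Submission
  imports Defs
begin

text \<open>Since \<open>V\<close> is a first integral of \<open>X\<close>, along the damped flow \<open>dV/dt = - |grad V|\<^sup>2 \<le> 0\<close>.
  Choose a collar \<open>r \<le> d(x, Z) \<le> 2r\<close> around the compact zero set \<open>Z\<close> inside \<open>W\<close>; \<open>V\<close> has a positive
  minimum on it, and below that level a trajectory in the \<open>2r\<close>-neighbourhood \<open>N\<close> can never reach the
  collar. Forward solutions exist by Picard iteration for a cut-off, globally Lipschitz version of
  the field, which agrees with \<open>X - grad V\<close> inside the collar.
  As \<open>Df\<close> is onto off \<open>Z\<close>, \<open>grad V = Df\<^sup>* K (f - f x0)\<close> vanishes only on \<open>Z\<close>, so on each compact slice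
  \<open>\<mu> \<le> V \<le> c\<close> near \<open>Z\<close> the dissipation is bounded below and \<open>V\<close> falls below any \<open>\<mu> > 0\<close> in finite
  time. Since \<open>V\<close> is bounded below by a positive constant on every band \<open>e \<le> d(x, Z) \<le> r\<close>, this
  forces \<open>d(\<phi> t, Z) \<longrightarrow> 0\<close>.\<close>

subsection \<open>Global solutions of bounded Lipschitz systems\<close>

lemma at_within_Ici_eq_Icc:
  fixes t b :: real
  assumes "0 \<le> t" "t < b"
  shows "at t within {0..} = at t within {0..b}"
proof (cases "t = 0")
  case True
  then show ?thesis using assms by (simp add: at_within_Ici_at_right at_within_Icc_at_right)
next
  case False
  then have "at t within {0..} = at t"
    using assms by (intro at_within_interior) simp
  also have "\<dots> = at t within {0..b}"
    using False assms by (simp add: at_within_Icc_at)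
  finally show ?thesis .
qed

lemma has_integral_exp_scaled:
  fixes k u :: real
  assumes "k \<noteq> 0" "0 \<le> u"
  shows "((\<lambda>s. exp (k * s)) has_integral (exp (k * u) - 1) / k) {0..u}"
proof -
  have "((\<lambda>s. exp (k * s)) has_integral exp (k * u) / k - exp (k * 0) / k) {0..u}"
    using assms by (intro fundamental_theorem_of_calculus)
      (auto intro!: derivative_eq_intros simp: has_real_derivative_iff_has_vector_derivative[symmetric])
  then show ?thesis by (simp add: diff_divide_distrib)
qed

lemma exp_neg_mult_times_le:
  fixes k u :: real
  assumes "0 < k"
  shows "exp (- k * u) * u \<le> 1 / k"
proof -
  have "k * u \<le> exp (k * u)" using exp_ge_add_one_self[of "k * u"] by linarith
  then show ?thesis using assms by (simp add: exp_minus field_simps)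
qed

lemma has_vector_derivative_integral_equation:
  fixes \<phi> :: "real \<Rightarrow> 'a::euclidean_space"
  assumes eq: "\<And>t. 0 \<le> t \<Longrightarrow> \<phi> t = x0 + integral {0..t} (\<lambda>s. G (\<phi> s))"
    and cont: "continuous_on {0..} (\<lambda>s. G (\<phi> s))" and "0 \<le> t"
  shows "(\<phi> has_vector_derivative G (\<phi> t)) (at t within {0..})"
proof -
  have "((\<lambda>u. integral {0..u} (\<lambda>s. G (\<phi> s))) has_vector_derivative G (\<phi> t)) (at t within {0..t+1})"
    using \<open>0 \<le> t\<close> by (intro integral_has_vector_derivative continuous_on_subset[OF cont]) auto
  then have "((\<lambda>u. x0 + integral {0..u} (\<lambda>s. G (\<phi> s))) has_vector_derivative G (\<phi> t)) (at t within {0..})"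
    using at_within_Ici_eq_Icc[OF \<open>0 \<le> t\<close>, of "t+1"] by (auto intro!: derivative_eq_intros)
  then show ?thesis
    by (rule has_vector_derivative_transform[rotated 2]) (use eq \<open>0 \<le> t\<close> in auto)
qed

text \<open>The solution is sought as \<open>\<phi> t = x0 + e\<^sup>k\<^sup>t g t\<close> with \<open>g\<close> bounded and continuous. In the sup norm
  of \<open>g\<close> (a Bielecki norm for \<open>\<phi>\<close>) the Picard operator is then a contraction on the whole half-line
  once \<open>k > 2L\<close>; the next two lemmas are the estimates behind this.\<close>

lemma weighted_integral_bound:
  fixes G :: "'a::euclidean_space \<Rightarrow> 'b::euclidean_space"
  assumes bnd: "\<And>y. norm (G y) \<le> M" and cont: "continuous_on {0..u} (\<lambda>s. G (\<psi> s))"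
    and "0 < k" "0 \<le> u"
  shows "exp (- k * u) * norm (integral {0..u} (\<lambda>s. G (\<psi> s))) \<le> M / k"
proof -
  have "M \<ge> 0" using bnd[of 0] norm_ge_zero order_trans by blast
  have "norm (integral {0..u} (\<lambda>s. G (\<psi> s))) \<le> M * (u - 0)"
    using \<open>0 \<le> u\<close> by (intro integral_bound cont) (auto simp: bnd)
  then have "exp (- k * u) * norm (integral {0..u} (\<lambda>s. G (\<psi> s))) \<le> M * (exp (- k * u) * u)"
    by (simp add: mult_left_mono algebra_simps)
  also have "\<dots> \<le> M * (1 / k)"
    using exp_neg_mult_times_le[OF \<open>0 < k\<close>] \<open>M \<ge> 0\<close> by (rule mult_left_mono)
  finally show ?thesis by simp
qed

lemma weighted_integral_lipschitz:
  fixes G :: "'a::euclidean_space \<Rightarrow> 'b::euclidean_space" and x0 :: 'a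
  assumes lip: "L-lipschitz_on UNIV G" and "0 < k" "0 \<le> u"
    and cont: "continuous_on {0..u} g" "continuous_on {0..u} h"
    and d: "\<And>s. dist (g s) (h s) \<le> d"
  defines "I \<equiv> \<lambda>g. integral {0..u} (\<lambda>s. G (x0 + exp (k * s) *\<^sub>R g s))"
  shows "exp (- k * u) * norm (I g - I h) \<le> L * d / k"
proof -
  have "L \<ge> 0" using lipschitz_on_nonneg[OF lip] .
  have "d \<ge> 0" using d[of 0] zero_le_dist order_trans by blast
  have Gc: "continuous_on {0..u} (\<lambda>s. G (x0 + exp (k * s) *\<^sub>R g s))" if "continuous_on {0..u} g" for g
    by (intro continuous_on_compose2[OF lipschitz_on_continuous_on[OF lip]] continuous_intros that) auto
  have E: "((\<lambda>s. L * d * exp (k * s)) has_integral L * d * ((exp (k * u) - 1) / k)) {0..u}"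
    using \<open>0 < k\<close> \<open>0 \<le> u\<close> by (intro has_integral_mult_right has_integral_exp_scaled) auto
  have "norm (I g - I h)
      = norm (integral {0..u} (\<lambda>s. G (x0 + exp (k * s) *\<^sub>R g s) - G (x0 + exp (k * s) *\<^sub>R h s)))"
    unfolding I_def using Gc[OF cont(1)] Gc[OF cont(2)]
    by (simp add: integral_diff integrable_continuous_real)
  also have "\<dots> \<le> integral {0..u} (\<lambda>s. L * d * exp (k * s))"
  proof (rule integral_norm_bound_integral)
    fix s
    have "norm (G (x0 + exp (k * s) *\<^sub>R g s) - G (x0 + exp (k * s) *\<^sub>R h s))
        \<le> L * (exp (k * s) * dist (g s) (h s))"
      using lipschitz_onD[OF lip, of "x0 + exp (k * s) *\<^sub>R g s" "x0 + exp (k * s) *\<^sub>R h s"]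
      by (simp add: dist_norm scaleR_diff_right[symmetric])
    also have "\<dots> \<le> L * d * exp (k * s)"
      using \<open>L \<ge> 0\<close> d[of s] by (simp add: mult_left_mono algebra_simps)
    finally show "norm (G (x0 + exp (k * s) *\<^sub>R g s) - G (x0 + exp (k * s) *\<^sub>R h s)) \<le> L * d * exp (k * s)" .
  qed (use Gc[OF cont(1)] Gc[OF cont(2)] in \<open>auto intro!: integrable_continuous_real continuous_intros\<close>)
  also have "\<dots> = L * d * ((exp (k * u) - 1) / k)"
    using E by (rule integral_unique)
  finally have "exp (- k * u) * norm (I g - I h) \<le> exp (- k * u) * (L * d * ((exp (k * u) - 1) / k))"
    by (rule mult_left_mono) simp
  also have "\<dots> = L * d / k * (1 - exp (- k * u))"
    using \<open>0 < k\<close> by (simp add: field_simps exp_minus)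
  also have "\<dots> \<le> L * d / k"
    by (rule mult_left_le) (use \<open>L \<ge> 0\<close> \<open>d \<ge> 0\<close> \<open>0 < k\<close> in simp_all)
  finally show ?thesis .
qed

lemma lipschitz_bounded_ode_solution:
  fixes G :: "'a::euclidean_space \<Rightarrow> 'a"
  assumes lip: "L-lipschitz_on UNIV G" and bnd: "\<And>y. norm (G y) \<le> M"
  shows "\<exists>\<phi>. \<phi> 0 = x0 \<and> (\<forall>t\<ge>0. (\<phi> has_vector_derivative G (\<phi> t)) (at t within {0..}))"
proof -
  define k where "k = 2 * L + 1"
  have "L \<ge> 0" using lipschitz_on_nonneg[OF lip] .
  then have "k > 0" by (simp add: k_def)
  have Gc: "continuous_on S (\<lambda>s. G (x0 + exp (k * s) *\<^sub>R g s))" if "continuous_on UNIV g" for g S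
    by (intro continuous_on_compose2[OF lipschitz_on_continuous_on[OF lip]] continuous_intros
        continuous_on_subset[OF that]) auto
  define Q where "Q g t = exp (- k * max 0 t) *\<^sub>R integral {0..max 0 t} (\<lambda>s. G (x0 + exp (k * s) *\<^sub>R g s))"
    for g t
  have Q_bcontfun: "Q g \<in> bcontfun" if g: "continuous_on UNIV g" for g
  proof -
    have I: "continuous_on {0..b} (\<lambda>u. integral {0..u} (\<lambda>s. G (x0 + exp (k * s) *\<^sub>R g s)))" for b
      by (intro indefinite_integral_continuous_1 integrable_continuous_real Gc g)
    have "continuous_on (ball t 1) (\<lambda>u. integral {0..max 0 u} (\<lambda>s. G (x0 + exp (k * s) *\<^sub>R g s)))" for t
      by (rule continuous_on_compose2[OF I[of "\<bar>t\<bar>+1"]]) (auto intro!: continuous_intros simp: dist_real_def)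
    then have "continuous_on (ball t 1) (Q g)" for t
      unfolding Q_def by (intro continuous_intros)
    then have "continuous_on UNIV (Q g)"
      by (meson centre_in_ball continuous_at_imp_continuous_on continuous_on_eq_continuous_at
          open_ball zero_less_one)
    moreover have "norm (Q g t) \<le> M / k" for t
      using weighted_integral_bound[where \<psi>="\<lambda>s. x0 + exp (k * s) *\<^sub>R g s", OF bnd Gc[OF g, of "{0..max 0 t}"] \<open>k > 0\<close>] by (simp add: Q_def)
    ultimately show ?thesis by (auto simp: bcontfun_def bounded_iff)
  qed
  define P where "P g = Bcontfun (Q (apply_bcontfun g))" for g
  have P_apply: "apply_bcontfun (P g) = Q (apply_bcontfun g)" for g
    unfolding P_def by (intro Bcontfun_inverse Q_bcontfun continuous_on_apply_bcontfun)
  have "dist (P g) (P h) \<le> 1/2 * dist g h" for g h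
  proof (rule dist_bound)
    fix t
    have "dist (P g t) (P h t) = exp (- k * max 0 t) * norm
        (integral {0..max 0 t} (\<lambda>s. G (x0 + exp (k * s) *\<^sub>R g s))
          - integral {0..max 0 t} (\<lambda>s. G (x0 + exp (k * s) *\<^sub>R h s)))"
      by (simp add: P_apply Q_def dist_norm scaleR_diff_right[symmetric])
    also have "\<dots> \<le> L * dist g h / k"
      using \<open>k > 0\<close> by (intro weighted_integral_lipschitz[OF lip] dist_bounded
          continuous_on_subset[OF continuous_on_apply_bcontfun]) auto
    also have "\<dots> \<le> 1/2 * dist g h"
      using \<open>L \<ge> 0\<close> by (simp add: k_def field_simps mult_right_mono)
    finally show "dist (P g t) (P h t) \<le> 1/2 * dist g h" .
  qed
  then obtain g where "P g = g"
    using banach_fix_type[of "1/2" P] by auto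
  then have g_fix: "apply_bcontfun g t = Q (apply_bcontfun g) t" for t
    by (metis P_apply)
  define \<phi> where "\<phi> t = x0 + exp (k * t) *\<^sub>R g t" for t
  have \<phi>_eq: "\<phi> t = x0 + integral {0..t} (\<lambda>s. G (\<phi> s))" if "0 \<le> t" for t
    using that by (subst \<phi>_def, subst g_fix) (simp add: Q_def exp_minus \<phi>_def)
  have "continuous_on {0..} (\<lambda>s. G (\<phi> s))"
    using Gc[of g] by (simp add: \<phi>_def continuous_on_apply_bcontfun)
  then show ?thesis
    using has_vector_derivative_integral_equation[OF \<phi>_eq] \<phi>_eq[of 0] by auto
qed

subsection \<open>Lipschitz estimates\<close>

lemma continuous_derivative_imp_lipschitz_on:
  fixes g :: "'a::euclidean_space \<Rightarrow> 'b::real_normed_vector"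
  assumes d: "\<And>x. x \<in> U \<Longrightarrow> (g has_derivative blinfun_apply (g' x)) (at x)"
    and c: "continuous_on U g'" and S: "compact S" "convex S" "S \<subseteq> U"
  shows "\<exists>L. L-lipschitz_on S g"
proof -
  obtain B where B: "B > 0" "\<And>x. x \<in> S \<Longrightarrow> norm (g' x) \<le> B"
    using compact_imp_bounded[OF compact_continuous_image[OF continuous_on_subset[OF c] S(1)]] S(3)
    by (auto simp: bounded_pos)
  have "B-lipschitz_on S g"
    using B S d by (intro bounded_derivative_imp_lipschitz)
      (auto intro: has_derivative_at_withinI simp: norm_blinfun.rep_eq)
  then show ?thesis by blast
qed

text \<open>Here \<open>v x = (A x)\<^sup>* (b x)\<close>; this is how Lipschitz continuity passes from \<open>Df\<close> to \<open>grad V\<close>.\<close>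

lemma lipschitz_on_inner_representation:
  fixes v :: "'a::real_inner \<Rightarrow> 'a" and A :: "'a \<Rightarrow> ('a \<Rightarrow>\<^sub>L 'c::real_inner)" and b :: "'a \<Rightarrow> 'c"
  assumes rep: "\<And>x h. x \<in> S \<Longrightarrow> v x \<bullet> h = A x h \<bullet> b x"
    and LA: "L1-lipschitz_on S A" and Lb: "L2-lipschitz_on S b" and "compact S"
  shows "\<exists>L. L-lipschitz_on S v"
proof -
  obtain B1 where B1: "B1 > 0" "\<And>x. x \<in> S \<Longrightarrow> norm (A x) \<le> B1"
    using compact_imp_bounded[OF compact_continuous_image[OF lipschitz_on_continuous_on[OF LA] \<open>compact S\<close>]]
    by (auto simp: bounded_pos)
  obtain B2 where B2: "B2 > 0" "\<And>x. x \<in> S \<Longrightarrow> norm (b x) \<le> B2"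
    using compact_imp_bounded[OF compact_continuous_image[OF lipschitz_on_continuous_on[OF Lb] \<open>compact S\<close>]]
    by (auto simp: bounded_pos)
  have "L1 \<ge> 0" "L2 \<ge> 0" using LA Lb lipschitz_on_nonneg by auto
  have "(L1 * B2 + B1 * L2)-lipschitz_on S v"
  proof (rule lipschitz_onI)
    fix x y assume x: "x \<in> S" and y: "y \<in> S"
    define w where "w = v x - v y"
    have "norm w ^ 2 = (A x w - A y w) \<bullet> b x + A y w \<bullet> (b x - b y)"
      using rep[OF x, of w] rep[OF y, of w]
      by (simp add: power2_norm_eq_inner w_def inner_diff_left inner_diff_right)
    also have "\<dots> \<le> norm (A x w - A y w) * norm (b x) + norm (A y w) * norm (b x - b y)"
      by (smt (verit) Cauchy_Schwarz_ineq2)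
    also have "\<dots> \<le> (L1 * dist x y * norm w) * B2 + (B1 * norm w) * (L2 * dist x y)"
    proof (intro add_mono mult_mono)
      have "norm (A x w - A y w) \<le> norm (A x - A y) * norm w"
        by (metis blinfun.diff_left norm_blinfun)
      also have "\<dots> \<le> L1 * dist x y * norm w"
        using lipschitz_onD[OF LA x y] by (intro mult_right_mono) (auto simp: dist_norm)
      finally show "norm (A x w - A y w) \<le> L1 * dist x y * norm w" .
      show "norm (A y w) \<le> B1 * norm w"
        using B1(2)[OF y] norm_blinfun[of "A y" w] by (meson mult_right_mono norm_ge_zero order_trans)
      show "norm (b x - b y) \<le> L2 * dist x y" using lipschitz_onD[OF Lb x y] by (simp add: dist_norm)
    qed (use B1 B2 \<open>L1 \<ge> 0\<close> \<open>L2 \<ge> 0\<close> x in auto)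
    finally have "norm w * norm w \<le> ((L1 * B2 + B1 * L2) * dist x y) * norm w"
      by (simp add: power2_eq_square algebra_simps)
    then show "dist (v x) (v y) \<le> (L1 * B2 + B1 * L2) * dist x y"
      using \<open>L1 \<ge> 0\<close> \<open>L2 \<ge> 0\<close> B1(1) B2(1)
      by (cases "norm w = 0") (auto simp: w_def dist_norm mult_le_cancel_right)
  qed (use B1 B2 \<open>L1 \<ge> 0\<close> \<open>L2 \<ge> 0\<close> in simp)
  then show ?thesis by blast
qed

lemma lipschitz_on_cutoff_scaleR:
  fixes F :: "'a::metric_space \<Rightarrow> 'b::real_normed_vector" and \<rho> :: "'a \<Rightarrow> real"
  assumes LF: "L-lipschitz_on C F" and MF: "\<And>x. x \<in> C \<Longrightarrow> norm (F x) \<le> M" and "0 \<le> M"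
    and L\<rho>: "L'-lipschitz_on UNIV \<rho>" and range: "\<And>x. 0 \<le> \<rho> x \<and> \<rho> x \<le> 1"
    and vanish: "\<And>x. x \<notin> C \<Longrightarrow> \<rho> x = 0"
  shows "(M * L' + L)-lipschitz_on UNIV (\<lambda>x. \<rho> x *\<^sub>R F x)"
proof -
  have "L \<ge> 0" "L' \<ge> 0" using LF L\<rho> lipschitz_on_nonneg by auto
  have \<rho>_diff: "\<bar>\<rho> x - \<rho> y\<bar> \<le> L' * dist x y" for x y
    using lipschitz_onD[OF L\<rho>, of x y] by (simp add: dist_real_def)
  have cross: "norm (\<rho> x *\<^sub>R F x - \<rho> y *\<^sub>R F y) \<le> (M * L' + L) * dist x y" if "x \<in> C" "y \<notin> C" for x y
  proof -
    have "norm (\<rho> x *\<^sub>R F x - \<rho> y *\<^sub>R F y) = \<bar>\<rho> x - \<rho> y\<bar> * norm (F x)"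
      using range[of x] vanish[OF that(2)] by simp
    also have "\<dots> \<le> (L' * dist x y) * M"
      using \<rho>_diff MF[OF that(1)] \<open>L' \<ge> 0\<close> by (intro mult_mono) auto
    also have "\<dots> \<le> (M * L' + L) * dist x y"
      using \<open>L \<ge> 0\<close> by (simp add: algebra_simps)
    finally show ?thesis .
  qed
  show ?thesis
  proof (rule lipschitz_onI)
    fix x y
    have "norm (\<rho> x *\<^sub>R F x - \<rho> y *\<^sub>R F y) \<le> (M * L' + L) * dist x y"
    proof (cases "x \<in> C"; cases "y \<in> C")
      assume xy: "x \<in> C" "y \<in> C"
      have "\<rho> x *\<^sub>R F x - \<rho> y *\<^sub>R F y = (\<rho> x - \<rho> y) *\<^sub>R F x + \<rho> y *\<^sub>R (F x - F y)"
        by (simp add: algebra_simps)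
      then have "norm (\<rho> x *\<^sub>R F x - \<rho> y *\<^sub>R F y) \<le> \<bar>\<rho> x - \<rho> y\<bar> * norm (F x) + \<rho> y * norm (F x - F y)"
        using range[of y] by (metis abs_of_nonneg norm_scaleR norm_triangle_ineq)
      also have "\<dots> \<le> (L' * dist x y) * M + 1 * (L * dist x y)"
      proof (rule add_mono)
        show "\<bar>\<rho> x - \<rho> y\<bar> * norm (F x) \<le> (L' * dist x y) * M"
          using \<rho>_diff MF[OF xy(1)] \<open>L' \<ge> 0\<close> by (intro mult_mono) auto
        show "\<rho> y * norm (F x - F y) \<le> 1 * (L * dist x y)"
          using range[of y] lipschitz_onD[OF LF xy] \<open>L \<ge> 0\<close> by (intro mult_mono) (auto simp: dist_norm)
      qed
      finally show ?thesis by (simp add: algebra_simps)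
    next
      assume "x \<in> C" "y \<notin> C"
      then show ?thesis by (rule cross)
    next
      assume "x \<notin> C" "y \<in> C"
      then show ?thesis using cross[of y x] by (simp add: norm_minus_commute dist_commute)
    qed (use vanish \<open>L \<ge> 0\<close> \<open>L' \<ge> 0\<close> \<open>0 \<le> M\<close> in simp)
    then show "dist (\<rho> x *\<^sub>R F x) (\<rho> y *\<^sub>R F y) \<le> (M * L' + L) * dist x y"
      by (simp add: dist_norm)
  qed (use \<open>0 \<le> M\<close> \<open>L \<ge> 0\<close> \<open>L' \<ge> 0\<close> in simp)
qed

subsection \<open>Dissipation along trajectories\<close>

lemma grad_eqI:
  assumes "(V has_derivative (\<lambda>h. g \<bullet> h)) (at x)"
  shows "grad V x = g"
proof -
  have "(V has_derivative (\<lambda>h. grad V x \<bullet> h)) (at x)"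
    unfolding grad_def by (rule someI[of _ g]) (rule assms)
  then have "(\<lambda>h. grad V x \<bullet> h) = (\<lambda>h. g \<bullet> h)"
    using assms by (rule has_derivative_unique)
  then have "(grad V x - g) \<bullet> (grad V x - g) = 0"
    by (metis inner_diff_left right_minus_eq)
  then show ?thesis by simp
qed

lemma has_derivative_half_quadratic_form:
  fixes f :: "'a::real_normed_vector \<Rightarrow> real^'m" and K :: "real^'m^'m"
  assumes "(f has_derivative f') (at x)" and "transpose K = K"
  shows "((\<lambda>y. 1/2 * ((f y - c) \<bullet> (K *v (f y - c)))) has_derivative (\<lambda>h. f' h \<bullet> (K *v (f x - c)))) (at x)"
proof -
  have sym: "a \<bullet> (K *v b) = (K *v a) \<bullet> b" for a b
    by (metis dot_lmul_matrix \<open>transpose K = K\<close> transpose_matrix_vector)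
  have "((\<lambda>y. 1/2 * ((f y - c) \<bullet> (K *v (f y - c)))) has_derivative
      (\<lambda>h. 1/2 * (f' h \<bullet> (K *v (f x - c)) + (f x - c) \<bullet> (K *v f' h)))) (at x)"
    by (auto intro!: derivative_eq_intros assms(1)
        bounded_linear.has_derivative[OF matrix_vector_mul_bounded_linear])
  then show ?thesis by (simp add: sym inner_commute[of _ "f' _"])
qed

lemma dissipation_estimate:
  fixes \<psi> :: "real \<Rightarrow> real^'n" and V :: "real^'n \<Rightarrow> real"
  assumes "a \<le> b" and cont: "continuous_on {a..b} \<psi>" and inU: "\<And>s. s \<in> {a..b} \<Longrightarrow> \<psi> s \<in> U"
    and Vc: "continuous_on U V"
    and Vd: "\<And>y. y \<in> U \<Longrightarrow> (V has_derivative (\<lambda>h. grad V y \<bullet> h)) (at y)"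
    and orth: "\<And>y. y \<in> U \<Longrightarrow> grad V y \<bullet> X y = 0"
    and der: "\<And>s. a < s \<Longrightarrow> s < b \<Longrightarrow> (\<psi> has_vector_derivative (X (\<psi> s) - grad V (\<psi> s))) (at s)"
    and \<delta>: "\<And>s. a < s \<Longrightarrow> s < b \<Longrightarrow> \<delta> \<le> norm (grad V (\<psi> s)) ^ 2"
  shows "V (\<psi> b) \<le> V (\<psi> a) - \<delta> * (b - a)"
proof -
  have "V (\<psi> b) + \<delta> * b \<le> V (\<psi> a) + \<delta> * a"
  proof (rule DERIV_nonpos_imp_decreasing_open[OF \<open>a \<le> b\<close>, where f="\<lambda>s. V (\<psi> s) + \<delta> * s"])
    fix s assume s: "a < s" "s < b"
    then have "\<psi> s \<in> U" using inU by auto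
    have "((\<lambda>s. V (\<psi> s)) has_derivative (\<lambda>h. grad V (\<psi> s) \<bullet> (h *\<^sub>R (X (\<psi> s) - grad V (\<psi> s))))) (at s)"
      using der[OF s] Vd[OF \<open>\<psi> s \<in> U\<close>] unfolding has_vector_derivative_def
      by (rule has_derivative_compose)
    then have "((\<lambda>s. V (\<psi> s) + \<delta> * s) has_real_derivative (\<delta> - norm (grad V (\<psi> s)) ^ 2)) (at s)"
      using orth[OF \<open>\<psi> s \<in> U\<close>]
      by (auto intro!: derivative_eq_intros simp: has_field_derivative_def inner_diff_right
          power2_norm_eq_inner algebra_simps)
    then show "\<exists>y. ((\<lambda>s. V (\<psi> s) + \<delta> * s) has_real_derivative y) (at s) \<and> y \<le> 0"
      using \<delta>[OF s] by auto
  qed (use inU in \<open>auto intro!: continuous_intros continuous_on_compose2[OF Vc cont]\<close>)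
  then show ?thesis by (simp add: algebra_simps)
qed

lemma compact_pos_lower_bound:
  fixes g :: "'a::metric_space \<Rightarrow> real"
  assumes "compact S" "continuous_on S g" "\<And>x. x \<in> S \<Longrightarrow> 0 < g x"
  obtains \<mu> where "0 < \<mu>" "\<And>x. x \<in> S \<Longrightarrow> \<mu> \<le> g x"
proof (cases "S = {}")
  case True
  then show ?thesis using that[of 1] by simp
next
  case False
  then obtain y where "y \<in> S" "\<And>x. x \<in> S \<Longrightarrow> g y \<le> g x"
    using continuous_attains_inf[OF assms(1) False assms(2)] by blast
  then show ?thesis using that assms(3) by blast
qed

lemma continuous_on_stays_below:
  fixes p :: "real \<Rightarrow> real"
  assumes cont: "continuous_on {0..} p" and "p 0 < r"
    and barrier: "\<And>T. 0 < T \<Longrightarrow> (\<And>s. s \<in> {0..T} \<Longrightarrow> p s \<le> r) \<Longrightarrow> p T < r"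
    and "0 \<le> t"
  shows "p t < r"
proof (rule ccontr)
  assume "\<not> p t < r"
  define B where "B = {0..} \<inter> p -` {r..}"
  have "B \<noteq> {}" using \<open>0 \<le> t\<close> \<open>\<not> p t < r\<close> by (auto simp: B_def)
  moreover have "bdd_below B" unfolding B_def by auto
  moreover have "closed B" unfolding B_def by (rule continuous_closed_preimage[OF cont]) auto
  ultimately have "Inf B \<in> B" by (rule closed_contains_Inf)
  define T where "T = Inf B"
  have "0 \<le> T" "r \<le> p T" using \<open>Inf B \<in> B\<close> by (auto simp: T_def B_def)
  have before: "p s < r" if "0 \<le> s" "s < T" for s
    using cInf_lower[of s B] \<open>bdd_below B\<close> that by (force simp: T_def B_def)
  have "0 < T" using \<open>0 \<le> T\<close> \<open>r \<le> p T\<close> \<open>p 0 < r\<close> by (cases "T = 0") auto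
  have "closed ({0..T} \<inter> p -` {..r})"
    by (rule continuous_closed_preimage[OF continuous_on_subset[OF cont]]) auto
  moreover have "{0..<T} \<subseteq> {0..T} \<inter> p -` {..r}" using before by (auto simp: less_imp_le)
  ultimately have "closure {0..<T} \<subseteq> {0..T} \<inter> p -` {..r}" by (rule closure_minimal[rotated])
  then have "p s \<le> r" if "s \<in> {0..T}" for s using \<open>0 < T\<close> that by auto
  then have "p T < r" by (rule barrier[OF \<open>0 < T\<close>])
  then show False using \<open>r \<le> p T\<close> by simp
qed

subsection \<open>The damped system near the zero set of \<open>V\<close>\<close>

locale damped_first_integral =
  fixes U W :: "(real^'n) set" and X :: "real^'n \<Rightarrow> real^'n" and f :: "real^'n \<Rightarrow> real^'m"
    and x0 :: "real^'n" and K :: "real^'m^'m" and V :: "real^'n \<Rightarrow> real"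
  assumes U_open: "open U" and X_C1: "C1_on U X" and f_C2: "C2_on U f" and x0_in: "x0 \<in> U"
    and K_spd: "sym_pos_def K"
    and V_def: "\<And>x. V x = (1/2) * ((f x - f x0) \<bullet> (K *v (f x - f x0)))"
    and orth: "\<And>x. x \<in> U \<Longrightarrow> grad V x \<bullet> X x = 0"
    and Z_compact: "compact {x \<in> U. V x = 0}"
    and W_open: "open W" and W_sub: "W \<subseteq> U" and Z_sub_W: "{x \<in> U. V x = 0} \<subseteq> W"
    and onto: "\<And>x. x \<in> W - {x \<in> U. V x = 0} \<Longrightarrow> surj (frechet_derivative f (at x))"
begin

abbreviation Z :: "(real^'n) set" where "Z \<equiv> {x \<in> U. V x = 0}"

lemma V_nonneg: "0 \<le> V x"
  using K_spd by (cases "f x = f x0") (auto simp: V_def sym_pos_def_def less_imp_le)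

lemma x0_in_Z: "x0 \<in> Z"
  using x0_in by (simp add: V_def)

lemma V_pos_outside_Z:
  assumes "x \<in> U" "0 < infdist x Z"
  shows "0 < V x"
  using assms V_nonneg[of x] by (cases "V x = 0") auto

lemma has_derivative_V_adjoint:
  assumes "(f has_derivative Df) (at x)"
  shows "(V has_derivative (\<lambda>h. adjoint Df (K *v (f x - f x0)) \<bullet> h)) (at x)"
proof -
  have "V = (\<lambda>y. 1/2 * ((f y - f x0) \<bullet> (K *v (f y - f x0))))" using V_def by blast
  moreover have "linear Df" using assms has_derivative_linear by blast
  ultimately show ?thesis
    using has_derivative_half_quadratic_form[OF assms] K_spd
    by (simp add: adjoint_clauses inner_commute sym_pos_def_def)
qed

lemma grad_V_inner:
  assumes "(f has_derivative Df) (at x)"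
  shows "grad V x \<bullet> h = Df h \<bullet> (K *v (f x - f x0))"
proof -
  have "linear Df" using assms has_derivative_linear by blast
  then show ?thesis
    using grad_eqI[OF has_derivative_V_adjoint[OF assms]] by (simp add: adjoint_clauses inner_commute)
qed

lemma f_derivatives:
  obtains Df D2f where "\<And>x. x \<in> U \<Longrightarrow> (f has_derivative blinfun_apply (Df x)) (at x)"
    and "\<And>x. x \<in> U \<Longrightarrow> (Df has_derivative blinfun_apply (D2f x)) (at x)" and "continuous_on U D2f"
  using f_C2 unfolding C2_on_def C1_on_def by blast

lemma has_derivative_V:
  assumes "x \<in> U"
  shows "(V has_derivative (\<lambda>h. grad V x \<bullet> h)) (at x)"
proof -
  obtain Df where "(f has_derivative blinfun_apply Df) (at x)"
    using f_derivatives assms by metis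
  then show ?thesis
    using has_derivative_V_adjoint grad_eqI by metis
qed

lemma continuous_on_V: "continuous_on U V"
  using has_derivative_V has_derivative_continuous by (blast intro: continuous_at_imp_continuous_on)

text \<open>Surjectivity of \<open>Df\<close> lets us test \<open>grad V\<close> against a preimage of \<open>K (f x - f x0)\<close>.\<close>

lemma grad_V_nonzero:
  assumes "x \<in> W" "V x \<noteq> 0"
  shows "grad V x \<noteq> 0"
proof
  assume "grad V x = 0"
  have "x \<in> U" using assms W_sub by auto
  then obtain Df where Df: "(f has_derivative Df) (at x)"
    using f_derivatives by metis
  have "surj Df" using onto[of x] assms \<open>x \<in> U\<close> frechet_derivative_at[OF Df] by auto
  then obtain h where "Df h = K *v (f x - f x0)" by (metis surjD)
  then have "(K *v (f x - f x0)) \<bullet> (K *v (f x - f x0)) = 0"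
    using grad_V_inner[OF Df, of h] \<open>grad V x = 0\<close> by simp
  then have "V x = 0" by (simp add: V_def)
  with assms show False by simp
qed

lemma field_lipschitz_on_cball:
  assumes "a \<in> U"
  obtains u L where "0 < u" "L-lipschitz_on (cball a u) (\<lambda>y. X y - grad V y)"
proof -
  obtain u where u: "0 < u" "cball a u \<subseteq> U" using open_contains_cball U_open assms by blast
  have S: "compact (cball a u)" "convex (cball a u)" by simp_all
  obtain X' where hX: "\<And>x. x \<in> U \<Longrightarrow> (X has_derivative blinfun_apply (X' x)) (at x)"
    and "continuous_on U X'"
    using X_C1 unfolding C1_on_def by blast
  obtain Df D2f where hf: "\<And>x. x \<in> U \<Longrightarrow> (f has_derivative blinfun_apply (Df x)) (at x)"
    and hDf: "\<And>x. x \<in> U \<Longrightarrow> (Df has_derivative blinfun_apply (D2f x)) (at x)"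
    and "continuous_on U D2f"
    using f_derivatives by blast
  have "continuous_on U Df"
    using hDf has_derivative_continuous by (blast intro: continuous_at_imp_continuous_on)
  obtain LX where LX: "LX-lipschitz_on (cball a u) X"
    using continuous_derivative_imp_lipschitz_on[OF hX \<open>continuous_on U X'\<close> S u(2)] by blast
  obtain LDf where LDf: "LDf-lipschitz_on (cball a u) Df"
    using continuous_derivative_imp_lipschitz_on[OF hDf \<open>continuous_on U D2f\<close> S u(2)] by blast
  obtain Lf where Lf: "Lf-lipschitz_on (cball a u) f"
    using continuous_derivative_imp_lipschitz_on[OF hf \<open>continuous_on U Df\<close> S u(2)] by blast
  obtain LK where LK: "LK-lipschitz_on UNIV ((*v) K)"
    using bounded_linear.lipschitz_boundE[OF matrix_vector_mul_bounded_linear] by blast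
  have Lb: "(LK * (Lf + 0))-lipschitz_on (cball a u) (\<lambda>y. K *v (f y - f x0))"
    by (intro lipschitz_on_compose2[where f="\<lambda>y. f y - f x0"] lipschitz_on_diff Lf
        lipschitz_on_constant lipschitz_on_subset[OF LK]) auto
  have rep: "grad V x \<bullet> h = Df x h \<bullet> (K *v (f x - f x0))" if "x \<in> cball a u" for x h
    using grad_V_inner[OF hf] u(2) that by blast
  obtain LV where "LV-lipschitz_on (cball a u) (grad V)"
    using lipschitz_on_inner_representation[OF rep LDf Lb S(1)] by blast
  then show ?thesis
    using that[OF u(1) lipschitz_on_diff[OF LX]] by blast
qed

lemma field_lipschitz_on_compact:
  assumes "compact C" "C \<subseteq> U"
  obtains L where "L-lipschitz_on C (\<lambda>y. X y - grad V y)"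
proof -
  have "local_lipschitz {0::real} C (\<lambda>_ y. X y - grad V y)"
  proof (rule local_lipschitzI)
    fix t x assume "x \<in> C"
    then obtain u L where "0 < u" "L-lipschitz_on (cball x u) (\<lambda>y. X y - grad V y)"
      using field_lipschitz_on_cball assms(2) by blast
    then show "\<exists>u>0. \<exists>L. \<forall>t\<in>cball t u \<inter> {0}. L-lipschitz_on (cball x u \<inter> C) (\<lambda>y. X y - grad V y)"
      using lipschitz_on_subset by blast
  qed
  then show ?thesis
    using local_lipschitz_compact_implies_lipschitz[OF _ assms(1) compact_sing] that by auto
qed

lemma continuous_on_grad_V: "continuous_on U (grad V)"
proof (rule continuous_at_imp_continuous_on, rule ballI)
  fix a assume "a \<in> U"
  then obtain u L where "0 < u" "L-lipschitz_on (cball a u) (\<lambda>y. X y - grad V y)"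
    by (rule field_lipschitz_on_cball)
  then have "continuous_on (ball a u) (\<lambda>y. X y - grad V y)"
    using lipschitz_on_continuous_on lipschitz_on_subset ball_subset_cball by blast
  then have "isCont (\<lambda>y. X y - grad V y) a"
    using continuous_on_eq_continuous_at[OF open_ball] \<open>0 < u\<close> centre_in_ball by blast
  moreover have "isCont X a"
    using X_C1 \<open>a \<in> U\<close> has_derivative_continuous unfolding C1_on_def by blast
  ultimately show "isCont (grad V) a"
    using continuous_diff[of "at a" X "\<lambda>y. X y - grad V y"] by simp
qed

lemma V_dissipation:
  assumes I: "is_interval I" and ab: "a \<in> I" "b \<in> I" "a \<le> b"
    and sol: "\<And>t. t \<in> I \<Longrightarrow> \<psi> t \<in> U \<and> (\<psi> has_vector_derivative (X (\<psi> t) - grad V (\<psi> t))) (at t within I)"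
    and \<delta>: "\<And>s. a < s \<Longrightarrow> s < b \<Longrightarrow> \<delta> \<le> norm (grad V (\<psi> s)) ^ 2"
  shows "V (\<psi> b) \<le> V (\<psi> a) - \<delta> * (b - a)"
proof (rule dissipation_estimate[OF \<open>a \<le> b\<close> _ _ continuous_on_V has_derivative_V orth _ \<delta>])
  have "{a..b} \<subseteq> I" using I ab by (meson atLeastAtMost_iff is_interval_1 subsetI)
  then show "\<And>s. s \<in> {a..b} \<Longrightarrow> \<psi> s \<in> U" using sol by blast
  have "continuous_on I \<psi>"
    unfolding continuous_on_eq_continuous_within using sol has_vector_derivative_continuous by blast
  then show "continuous_on {a..b} \<psi>" using \<open>{a..b} \<subseteq> I\<close> by (rule continuous_on_subset)
  fix s assume "a < s" "s < b"
  then have "s \<in> interior I"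
    using \<open>{a..b} \<subseteq> I\<close> interior_maximal[of "{a<..<b}" I] by fastforce
  then show "(\<psi> has_vector_derivative (X (\<psi> s) - grad V (\<psi> s))) (at s)"
    using sol[of s] interior_subset at_within_interior[of s I] by auto
qed

lemma compact_infdist_le_Z: "0 < b \<Longrightarrow> compact {x. infdist x Z \<le> b}"
  using compact_infdist_le[OF _ Z_compact] x0_in_Z by blast

lemma compact_infdist_band:
  assumes "0 < b"
  shows "compact {x. a \<le> infdist x Z \<and> infdist x Z \<le> b}"
proof -
  have "closed {x. a \<le> infdist x Z}"
    by (intro closed_Collect_le continuous_intros)
  moreover have "compact {x. infdist x Z \<le> b}"
    using assms by (rule compact_infdist_le_Z)
  ultimately have "compact ({x. infdist x Z \<le> b} \<inter> {x. a \<le> infdist x Z})"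
    by (rule compact_Int_closed[rotated])
  then show ?thesis by (simp add: Int_def conj_commute)
qed

lemma compact_V_slice:
  assumes "compact S" "S \<subseteq> U"
  shows "compact {x \<in> S. \<mu> \<le> V x \<and> V x \<le> \<nu>}"
proof -
  have "closed (S \<inter> V -` {\<mu>..\<nu>})"
    using assms by (intro continuous_closed_preimage continuous_on_subset[OF continuous_on_V]
        compact_imp_closed) auto
  then have "compact (S \<inter> (S \<inter> V -` {\<mu>..\<nu>}))"
    by (rule compact_Int_closed[OF assms(1)])
  then show ?thesis by (simp add: Int_def conj_commute)
qed

lemma trapping_radius:
  obtains r c where "0 < r" "0 < c" "{x. infdist x Z \<le> 2 * r} \<subseteq> W"
    and "\<And>x. r \<le> infdist x Z \<Longrightarrow> infdist x Z \<le> 2 * r \<Longrightarrow> c < V x"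
proof -
  obtain \<epsilon> where "0 < \<epsilon>" and \<epsilon>: "(\<Union>z\<in>Z. cball z \<epsilon>) \<subseteq> W"
    using compact_subset_open_imp_cball_epsilon_subset[OF Z_compact W_open Z_sub_W] by blast
  define r where "r = \<epsilon> / 2"
  have "0 < r" using \<open>0 < \<epsilon>\<close> by (simp add: r_def)
  have collar: "{x. infdist x Z \<le> 2 * r} \<subseteq> W"
  proof
    fix x assume "x \<in> {x. infdist x Z \<le> 2 * r}"
    moreover obtain z where "z \<in> Z" "infdist x Z = dist x z"
      using infdist_attains_inf[OF compact_imp_closed[OF Z_compact]] x0_in_Z by blast
    ultimately have "x \<in> cball z \<epsilon>" by (simp add: r_def dist_commute)
    then show "x \<in> W" using \<epsilon> \<open>z \<in> Z\<close> by blast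
  qed
  define A where "A = {x. r \<le> infdist x Z \<and> infdist x Z \<le> 2 * r}"
  have "A \<subseteq> U" using collar W_sub by (auto simp: A_def)
  moreover have "compact A" unfolding A_def using \<open>0 < r\<close> by (intro compact_infdist_band) simp
  moreover have "0 < V x" if "x \<in> A" for x
    using that \<open>0 < r\<close> \<open>A \<subseteq> U\<close> by (intro V_pos_outside_Z) (auto simp: A_def)
  ultimately obtain m where "0 < m" and m: "\<And>x. x \<in> A \<Longrightarrow> m \<le> V x"
    using compact_pos_lower_bound[OF _ continuous_on_subset[OF continuous_on_V]] by blast
  show ?thesis
  proof (rule that[OF \<open>0 < r\<close> _ collar])
    show "0 < m / 2" using \<open>0 < m\<close> by simp
    fix x assume "r \<le> infdist x Z" "infdist x Z \<le> 2 * r"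
    then have "m \<le> V x" using m by (simp add: A_def)
    then show "m / 2 < V x" using \<open>0 < m\<close> by simp
  qed
qed

end

locale damped_first_integral_trap = damped_first_integral +
  fixes r c :: real
  assumes r_pos: "0 < r" and c_pos: "0 < c"
    and collar_sub_W: "{x. infdist x Z \<le> 2 * r} \<subseteq> W"
    and V_on_collar: "\<And>x. r \<le> infdist x Z \<Longrightarrow> infdist x Z \<le> 2 * r \<Longrightarrow> c < V x"
begin

abbreviation N where "N \<equiv> {x. infdist x Z < 2 * r}"

lemma open_N: "open N"
  by (intro open_Collect_less continuous_intros)

lemma Z_subset_N: "Z \<subseteq> N"
  using r_pos by auto

lemma N_subset_W: "N \<subseteq> W"
  using collar_sub_W by auto

lemma collar_subset_U: "infdist x Z \<le> 2 * r \<Longrightarrow> x \<in> U"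
  using collar_sub_W W_sub by auto

lemma sublevel_near_Z:
  assumes "x \<in> N" "V x \<le> c"
  shows "infdist x Z < r"
  using V_on_collar[of x] assms by force

lemma sublevel_invariant:
  assumes "V (\<phi> 0) \<le> c"
    and sol: "\<And>t. t \<in> {0..T} \<Longrightarrow> \<phi> t \<in> N \<and> (\<phi> has_vector_derivative (X (\<phi> t) - grad V (\<phi> t))) (at t within {0..T})"
    and "t \<in> {0..T}"
  shows "V (\<phi> t) \<le> c"
proof -
  have "V (\<phi> t) \<le> V (\<phi> 0) - 0 * (t - 0)"
    using \<open>t \<in> {0..T}\<close> sol N_subset_W W_sub by (intro V_dissipation[of "{0..T}"]) auto
  then show ?thesis using assms(1) by simp
qed

text \<open>\<open>X - grad V\<close> is only locally Lipschitz on \<open>U\<close>; cut off outside the collar it becomes globally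
  Lipschitz and bounded, so that \<open>lipschitz_bounded_ode_solution\<close> applies.\<close>

lemma cutoff_field:
  obtains G L M where "L-lipschitz_on UNIV G" "\<And>y. norm (G y) \<le> M"
    and "\<And>y. infdist y Z \<le> r \<Longrightarrow> G y = X y - grad V y"
proof -
  define C where "C = {x. infdist x Z \<le> 2 * r}"
  have "compact C" unfolding C_def using r_pos by (intro compact_infdist_le_Z) simp
  moreover have "C \<subseteq> U" unfolding C_def using collar_subset_U by blast
  ultimately obtain LF where LF: "LF-lipschitz_on C (\<lambda>y. X y - grad V y)"
    by (rule field_lipschitz_on_compact)
  obtain M where "0 < M" and M: "\<And>y. y \<in> C \<Longrightarrow> norm (X y - grad V y) \<le> M"
    using compact_imp_bounded[OF compact_continuous_image[OF lipschitz_on_continuous_on[OF LF] \<open>compact C\<close>]]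
    by (auto simp: bounded_pos)
  define \<rho> where "\<rho> x = max 0 (min 1 (2 - infdist x Z / r))" for x
  have \<rho>_lip: "(1 / r)-lipschitz_on UNIV \<rho>"
  proof (rule lipschitz_onI)
    fix x y
    have "\<bar>infdist x Z / r - infdist y Z / r\<bar> \<le> dist x y / r"
      using infdist_triangle_abs[of x Z y] r_pos
      by (simp add: diff_divide_distrib[symmetric] abs_divide divide_right_mono)
    then have "\<bar>infdist x Z / r - infdist y Z / r\<bar> \<le> 1 / r * dist x y" by simp
    then show "dist (\<rho> x) (\<rho> y) \<le> 1 / r * dist x y"
      unfolding \<rho>_def dist_real_def by linarith
  qed (use r_pos in simp)
  have \<rho>_range: "0 \<le> \<rho> x \<and> \<rho> x \<le> 1" for x by (simp add: \<rho>_def)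
  have \<rho>_vanish: "\<rho> x = 0" if "x \<notin> C" for x using that r_pos by (auto simp: \<rho>_def C_def field_simps)
  have lip: "(M * (1 / r) + LF)-lipschitz_on UNIV (\<lambda>x. \<rho> x *\<^sub>R (X x - grad V x))"
    using lipschitz_on_cutoff_scaleR[OF LF M less_imp_le[OF \<open>0 < M\<close>] \<rho>_lip \<rho>_range \<rho>_vanish] .
  have bound: "norm (\<rho> x *\<^sub>R (X x - grad V x)) \<le> M" for x
  proof (cases "x \<in> C")
    case True
    have "\<rho> x * norm (X x - grad V x) \<le> 1 * M"
      using M[OF True] \<rho>_range[of x] by (intro mult_mono) auto
    then show ?thesis using \<rho>_range[of x] by simp
  next
    case False
    then show ?thesis using \<rho>_vanish \<open>0 < M\<close> by simp
  qed
  show ?thesis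
  proof (rule that[OF lip bound])
    fix y assume "infdist y Z \<le> r"
    then have "\<rho> y = 1" using r_pos by (auto simp: \<rho>_def field_simps)
    then show "\<rho> y *\<^sub>R (X y - grad V y) = X y - grad V y" by simp
  qed
qed

lemma solution_exists:
  assumes "x \<in> N" "V x \<le> c"
  shows "\<exists>\<phi>. \<phi> 0 = x \<and> (\<forall>t\<ge>0. \<phi> t \<in> N \<and> (\<phi> has_vector_derivative (X (\<phi> t) - grad V (\<phi> t))) (at t within {0..}))"
proof -
  obtain G L M where lip: "L-lipschitz_on UNIV G" and bound: "\<And>y. norm (G y) \<le> M"
    and G: "\<And>y. infdist y Z \<le> r \<Longrightarrow> G y = X y - grad V y"
    by (rule cutoff_field) (rule that)
  obtain \<phi> where "\<phi> 0 = x" and \<phi>: "\<And>t. 0 \<le> t \<Longrightarrow> (\<phi> has_vector_derivative G (\<phi> t)) (at t within {0..})"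
    using lipschitz_bounded_ode_solution[OF lip bound, of x] by blast
  have "continuous_on {0..} \<phi>"
    unfolding continuous_on_eq_continuous_within using \<phi> has_vector_derivative_continuous by blast
  have near: "infdist (\<phi> t) Z < r" if "0 \<le> t" for t
  proof (rule continuous_on_stays_below[where p="\<lambda>t. infdist (\<phi> t) Z", OF _ _ _ that])
    show "continuous_on {0..} (\<lambda>t. infdist (\<phi> t) Z)"
      by (intro continuous_intros \<open>continuous_on {0..} \<phi>\<close>)
    show "infdist (\<phi> 0) Z < r" using sublevel_near_Z assms \<open>\<phi> 0 = x\<close> by simp
    fix T :: real assume "0 < T" and le: "\<And>s. s \<in> {0..T} \<Longrightarrow> infdist (\<phi> s) Z \<le> r"
    have "V (\<phi> T) \<le> V (\<phi> 0) - 0 * (T - 0)"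
    proof (rule V_dissipation[of "{0..T}"])
      fix s assume s: "s \<in> {0..T}"
      have "infdist (\<phi> s) Z \<le> 2 * r" using le[OF s] r_pos by simp
      then have "\<phi> s \<in> U" by (rule collar_subset_U)
      moreover have "(\<phi> has_vector_derivative G (\<phi> s)) (at s within {0..T})"
        using s by (intro has_vector_derivative_within_subset[OF \<phi>]) auto
      ultimately show "\<phi> s \<in> U \<and> (\<phi> has_vector_derivative (X (\<phi> s) - grad V (\<phi> s))) (at s within {0..T})"
        using G[OF le[OF s]] by simp
    qed (use \<open>0 < T\<close> in auto)
    then have "V (\<phi> T) \<le> c" using assms \<open>\<phi> 0 = x\<close> by simp
    moreover have "infdist (\<phi> T) Z \<le> 2 * r" using le[of T] \<open>0 < T\<close> r_pos by simp
    ultimately show "infdist (\<phi> T) Z < r" using V_on_collar[of "\<phi> T"] by fastforce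
  qed
  have "\<phi> t \<in> N \<and> (\<phi> has_vector_derivative (X (\<phi> t) - grad V (\<phi> t))) (at t within {0..})"
    if "0 \<le> t" for t
    using near[OF that] \<phi>[OF that] G[of "\<phi> t"] r_pos by simp
  then show ?thesis using \<open>\<phi> 0 = x\<close> by blast
qed

context
  fixes \<phi> :: "real \<Rightarrow> _"
  assumes start: "V (\<phi> 0) \<le> c"
    and sol: "\<And>t. 0 \<le> t \<Longrightarrow> \<phi> t \<in> N \<and> (\<phi> has_vector_derivative (X (\<phi> t) - grad V (\<phi> t))) (at t within {0..})"
begin

lemma solution_dissipation:
  assumes "0 \<le> a" "a \<le> b" "\<And>s. a < s \<Longrightarrow> s < b \<Longrightarrow> \<delta> \<le> norm (grad V (\<phi> s)) ^ 2"
  shows "V (\<phi> b) \<le> V (\<phi> a) - \<delta> * (b - a)"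
  using assms sol N_subset_W W_sub by (intro V_dissipation[of "{0..}"]) auto

lemma solution_V_mono:
  assumes "0 \<le> a" "a \<le> b"
  shows "V (\<phi> b) \<le> V (\<phi> a)"
  using solution_dissipation[OF assms, of 0] by simp

lemma solution_near_Z:
  assumes "0 \<le> t"
  shows "infdist (\<phi> t) Z < r"
  using sol[OF assms] start solution_V_mono[OF order_refl assms] by (intro sublevel_near_Z) auto

text \<open>On the compact set where \<open>\<mu> \<le> V \<le> c\<close> near \<open>Z\<close>, \<open>|grad V|\<^sup>2\<close> has a positive minimum \<open>\<delta>\<close>,
  so \<open>V\<close> would drop below \<open>0\<close> before time \<open>c/\<delta> + 1\<close>.\<close>

lemma solution_reaches_sublevel:
  assumes "0 < \<mu>"
  obtains t where "0 \<le> t" "V (\<phi> t) < \<mu>"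
proof -
  define S where "S = {x \<in> {x. 0 \<le> infdist x Z \<and> infdist x Z \<le> r}. \<mu> \<le> V x \<and> V x \<le> c}"
  have "{x. 0 \<le> infdist x Z \<and> infdist x Z \<le> r} \<subseteq> U"
    using r_pos by (auto intro!: collar_subset_U)
  then have "compact S"
    unfolding S_def by (rule compact_V_slice[OF compact_infdist_band[OF r_pos]])
  moreover have "S \<subseteq> U" using \<open>{x. 0 \<le> infdist x Z \<and> infdist x Z \<le> r} \<subseteq> U\<close> by (auto simp: S_def)
  moreover have "0 < norm (grad V x) ^ 2" if "x \<in> S" for x
  proof -
    have "x \<in> W" "V x \<noteq> 0"
      using that collar_sub_W r_pos assms by (auto simp: S_def)
    then show ?thesis using grad_V_nonzero by simp
  qed
  moreover have "continuous_on S (\<lambda>x. norm (grad V x) ^ 2)"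
    using \<open>S \<subseteq> U\<close> by (intro continuous_intros continuous_on_subset[OF continuous_on_grad_V])
  ultimately obtain \<delta> where "0 < \<delta>" and \<delta>: "\<And>x. x \<in> S \<Longrightarrow> \<delta> \<le> norm (grad V x) ^ 2"
    using compact_pos_lower_bound by blast
  have "\<exists>t\<ge>0. V (\<phi> t) < \<mu>"
  proof (rule ccontr)
    assume "\<not> (\<exists>t\<ge>0. V (\<phi> t) < \<mu>)"
    then have above: "\<mu> \<le> V (\<phi> t)" if "0 \<le> t" for t using that by (meson not_less)
    define T where "T = c / \<delta> + 1"
    have "0 \<le> T" using c_pos \<open>0 < \<delta>\<close> by (simp add: T_def)
    have "V (\<phi> T) \<le> V (\<phi> 0) - \<delta> * (T - 0)"
    proof (rule solution_dissipation)
      fix s assume "0 < s" "s < T"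
      then have "infdist (\<phi> s) Z \<le> r" "\<mu> \<le> V (\<phi> s)" "V (\<phi> s) \<le> c"
        using solution_near_Z[of s] above[of s] solution_V_mono[of 0 s] start by auto
      then have "\<phi> s \<in> S" by (simp add: S_def infdist_nonneg)
      then show "\<delta> \<le> norm (grad V (\<phi> s)) ^ 2" by (rule \<delta>)
    qed (use \<open>0 \<le> T\<close> in auto)
    also have "\<dots> \<le> - \<delta>" using start \<open>0 < \<delta>\<close> by (simp add: T_def algebra_simps)
    finally show False using V_nonneg[of "\<phi> T"] \<open>0 < \<delta>\<close> by simp
  qed
  then show ?thesis using that by blast
qed

lemma solution_tends_to_Z: "((\<lambda>t. infdist (\<phi> t) Z) \<longlongrightarrow> 0) at_top"
proof (rule tendstoI)
  fix e :: real assume "0 < e"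
  define B where "B = {x. e \<le> infdist x Z \<and> infdist x Z \<le> r}"
  have "compact B" unfolding B_def using r_pos by (intro compact_infdist_band)
  moreover have "B \<subseteq> U" using r_pos by (auto simp: B_def intro!: collar_subset_U)
  moreover have "0 < V x" if "x \<in> B" for x
    using that \<open>B \<subseteq> U\<close> \<open>0 < e\<close> by (intro V_pos_outside_Z) (auto simp: B_def)
  ultimately obtain \<mu> where "0 < \<mu>" and \<mu>: "\<And>x. x \<in> B \<Longrightarrow> \<mu> \<le> V x"
    using compact_pos_lower_bound[OF _ continuous_on_subset[OF continuous_on_V]] by blast
  obtain t0 where "0 \<le> t0" "V (\<phi> t0) < \<mu>"
    using solution_reaches_sublevel[OF \<open>0 < \<mu>\<close>] by blast
  have "infdist (\<phi> t) Z < e" if "t0 \<le> t" for t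
  proof (rule ccontr)
    assume "\<not> infdist (\<phi> t) Z < e"
    then have "\<phi> t \<in> B"
      using solution_near_Z[of t] that \<open>0 \<le> t0\<close> by (auto simp: B_def)
    then show False
      using \<mu> solution_V_mono[OF \<open>0 \<le> t0\<close> that] \<open>V (\<phi> t0) < \<mu>\<close> by fastforce
  qed
  then show "\<forall>\<^sub>F t in at_top. dist (infdist (\<phi> t) Z) 0 < e"
    unfolding eventually_at_top_linorder by (auto simp: infdist_nonneg)
qed

end

end

theorem theorem4:
  fixes U W :: "(real^'n) set"
    and X :: "real^'n \<Rightarrow> real^'n"
    and f :: "real^'n \<Rightarrow> real^'m"
    and x0 :: "real^'n"
    and K :: "real^'m^'m"
    and V :: "real^'n \<Rightarrow> real"
  assumes U_open: "open U"
    and X_C1: "C1_on U X"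
    and f_C2: "C2_on U f"
    and x0_in: "x0 \<in> U"
    and K_spd: "sym_pos_def K"
    and V_def: "\<And>x. V x = (1/2) * ((f x - f x0) \<bullet> (K *v (f x - f x0)))"
    and orth: "\<And>x. x \<in> U \<Longrightarrow> grad V x \<bullet> X x = 0"
    and Z_compact: "compact {x \<in> U. V x = 0}"
    and W_open: "open W" and W_sub: "W \<subseteq> U" and Z_sub_W: "{x \<in> U. V x = 0} \<subseteq> W"
    and onto: "\<And>x. x \<in> W - {x \<in> U. V x = 0} \<Longrightarrow> surj (frechet_derivative f (at x))"
  shows "\<exists>N c. open N \<and> {x \<in> U. V x = 0} \<subseteq> N \<and> N \<subseteq> W \<and> c > 0 \<and>
    (\<forall>x \<in> {y \<in> N. V y \<le> c}. \<exists>\<phi>. \<phi> 0 = x \<and>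
        (\<forall>t\<ge>0. \<phi> t \<in> N \<and> (\<phi> has_vector_derivative (X (\<phi> t) - grad V (\<phi> t))) (at t within {0..}))) \<and>
    (\<forall>\<phi> T. \<phi> 0 \<in> {y \<in> N. V y \<le> c} \<and>
        (\<forall>t\<in>{0..T}. \<phi> t \<in> N \<and> (\<phi> has_vector_derivative (X (\<phi> t) - grad V (\<phi> t))) (at t within {0..T}))
        \<longrightarrow> (\<forall>t\<in>{0..T}. \<phi> t \<in> {y \<in> N. V y \<le> c})) \<and>
    (\<forall>\<phi>. \<phi> 0 \<in> {y \<in> N. V y \<le> c} \<and>
        (\<forall>t\<ge>0. \<phi> t \<in> N \<and> (\<phi> has_vector_derivative (X (\<phi> t) - grad V (\<phi> t))) (at t within {0..}))
        \<longrightarrow> ((\<lambda>t. infdist (\<phi> t) {x \<in> U. V x = 0}) \<longlongrightarrow> 0) at_top)"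
proof -
  interpret damped_first_integral U W X f x0 K V
    by unfold_locales (fact assms)+
  obtain r c where "0 < r" "0 < c" "{x. infdist x Z \<le> 2 * r} \<subseteq> W"
    and "\<And>x. r \<le> infdist x Z \<Longrightarrow> infdist x Z \<le> 2 * r \<Longrightarrow> c < V x"
    using trapping_radius by blast
  then interpret damped_first_integral_trap U W X f x0 K V r c
    by unfold_locales
  show ?thesis
  proof (intro exI[of _ N] exI[of _ c] conjI open_N Z_subset_N N_subset_W c_pos allI impI ballI)
    show "\<exists>\<phi>. \<phi> 0 = x \<and> (\<forall>t\<ge>0. \<phi> t \<in> N \<and> (\<phi> has_vector_derivative (X (\<phi> t) - grad V (\<phi> t))) (at t within {0..}))"
      if "x \<in> {y \<in> N. V y \<le> c}" for x
      using that by (intro solution_exists) auto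
    show "\<phi> t \<in> {y \<in> N. V y \<le> c}"
      if "\<phi> 0 \<in> {y \<in> N. V y \<le> c} \<and>
        (\<forall>t\<in>{0..T}. \<phi> t \<in> N \<and> (\<phi> has_vector_derivative (X (\<phi> t) - grad V (\<phi> t))) (at t within {0..T}))"
        and "t \<in> {0..T}" for \<phi> T t
      using that sublevel_invariant[of \<phi> T t] by auto
    show "((\<lambda>t. infdist (\<phi> t) Z) \<longlongrightarrow> 0) at_top"
      if "\<phi> 0 \<in> {y \<in> N. V y \<le> c} \<and>
        (\<forall>t\<ge>0. \<phi> t \<in> N \<and> (\<phi> has_vector_derivative (X (\<phi> t) - grad V (\<phi> t))) (at t within {0..}))" for \<phi>
      using that by (intro solution_tends_to_Z) auto
  qed
qed

end
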